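(* Consider any fair, well-formed execution of COP as described in the context (with $S$ correct or Byzantine), and for each client $C_i$ let $\pi_i$ be the sequence defined in the context. For any clients $C_i,C_j$ and any operation $o\in\pi_i\cap\pi_j$, we have $\pi_i|^o=\pi_j|^o$, where $\pi|^o$ denotes the prefix of $\pi$ ending with $o$.
   Context: System model. Clients $C_1,\dots,C_n$ and server $S$ in an asynchronous system, each client connected to $S$ by a reliable FIFO channel; clients are correct; $S$ is correct or Byzantine (may send arbitrary messages). Executions are fair and well-formed. Functionality. $F$ is deterministic over states $\mathcal{S}$, operations $\mathcal{O}$, responses $\mathcal{R}$: $F(s,o)=(s',r)$, extended to sequences by applying operations in order. $\mathrm{commute}_F(s,\rho_1,\rho_2)$ is true iff every interleaving of sequences $\rho_1,\rho_2$ (preserving each one's internal order) executed from $s$ yields the same final state and the same respective responses. Cryptography (ideal). $\mathrm{hash}$ is ideal collision-free; $\mathrm{sign}_i$ is invocable only by $C_i$ and $\mathrm{verify}_i(\phi,m)$ is true iff $C_i$ previously executed $\mathrm{sign}_i(m)$ obtaining $\phi$. $\|$ is concatenation. COP client $C_i$. State: $u$ (initially $\bot$); $c$ (initially $0$); map $H$ with $H[0]=\mathrm{null}$; map $Z$ to $\{\mathrm{success},\mathrm{abort}\}$; state $s$ (initially $s_0$). (1) On invocation of $o$: $u\leftarrow o$, send $\langle\mathrm{invoke},o,c,\mathrm{sign}_i(\mathrm{invoke}\|o\|i)\rangle$ to $S$. (2) On $\langle\mathrm{reply},\omega\rangle$: $\gamma,\mu\leftarrow\langle\rangle$. For $k=1,\dots,\mathrm{length}(\omega)$: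 $(o,j,\tau)=\omega[k]$, $l=c+k$; halt if $\mathrm{verify}_j(\tau,\mathrm{invoke}\|o\|j)$ fails; if $H[l]$ undefined set $H[l]\leftarrow\mathrm{hash}(H[l-1]\|o\|l\|j)$, else halt if $H[l]\neq\mathrm{hash}(H[l-1]\|o\|l\|j)$; if $j=i$ and $Z[l]=\mathrm{success}$ append $o$ to $\mu$, else if $j\neq i$ append $o$ to $\gamma$. Halt if $\omega$ is empty or its last entry has operation $\neq u$ or index $\neq i$. $(a,r)\leftarrow F(s,\mu)$. If $\mathrm{commute}_F(a,\langle u\rangle,\gamma)$: $(a,r)\leftarrow F(a,u)$, $Z[l]\leftarrow\mathrm{success}$; else $r\leftarrow\bot$, $Z[l]\leftarrow\mathrm{abort}$. Send $\langle\mathrm{commit},u,l,H[l],Z[l],\mathrm{sign}_i(\mathrm{commit}\|u\|l\|H[l]\|Z[l])\rangle$ to $S$, set $u\leftarrow\bot$, output $r$. (3) On $\langle\mathrm{broadcast},o,q,h,z,\phi,j\rangle$: halt unless $q=c+1$ and $\mathrm{verify}_j(\phi,\mathrm{commit}\|o\|q\|h\|z)$; if $H[q]$ undefined set $H[q]\leftarrow\mathrm{hash}(H[q-1]\|o\|q\|j)$; halt if $h\neq H[q]$; if $z=\mathrm{success}$, $(s,\cdot)\leftarrow F(s,o)$; $c\leftarrow c+1$. COP server $S$ (when correct). State $t=0$, $b=0$, maps $I,O$ empty. On $\langle\mathrm{invoke},o,c,\tau\rangle$ from $C_i$: $t\leftarrow t+1$, $I[t]\leftarrow(o,i,\tau)$,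 send $\langle\mathrm{reply},\langle I[c+1],\dots,I[t]\rangle\rangle$ to $C_i$. On $\langle\mathrm{commit},o,q,h,z,\phi\rangle$ from $C_i$: $O[q]\leftarrow(o,h,z,\phi,i)$; while $O[b+1]$ defined: $b\leftarrow b+1$, send $\langle\mathrm{broadcast},o',b,h',z',\phi',j\rangle$ to all clients where $(o',h',z',\phi',j)=O[b]$. Terminology. $C_i$ commits $o$ when it issues the commit signature in step (2); the value $l$ there is the sequence number of $o$. A client confirms $o$ when it processes a broadcast message for $o$ in step (3) passing all checks. Definition of $\pi_i$: let $o$ be the operation committed by $C_i$ with the highest sequence number among those operations of $C_i$ that have been confirmed by some client $C_k$ (possibly $C_k=C_i$); let $\alpha_i$ be the sequence of operations confirmed by $C_k$ up to and including $o$; let $\beta_i$ be the sequence of operations committed by $C_i$ with sequence number higher than that of $o$, in order of sequence number; $\pi_i=\alpha_i\circ\beta_i$ (concatenation). *)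

theory Defs
  imports Main
begin

fun runF :: "('s \<Rightarrow> 'ob \<Rightarrow> 's \<times> 'r) \<Rightarrow> 's \<Rightarrow> 'ob list \<Rightarrow> 's \<times> 'r list" where
  "runF F s [] = (s, [])"
| "runF F s (ob # os) =
     (let (s1, r) = F s ob; (s2, rs) = runF F s1 os in (s2, r # rs))"

text \<open>An interleaving of rho1 and rho2: a list of tagged operations
  (True = from rho1, False = from rho2) preserving each internal order.\<close>
definition is_interleaving :: "(bool \<times> 'ob) list \<Rightarrow> 'ob list \<Rightarrow> 'ob list \<Rightarrow> bool" where
  "is_interleaving w rho1 rho2 \<longleftrightarrow>
     map snd (filter fst w) = rho1 \<and> map snd (filter (\<lambda>x. \<not> fst x) w) = rho2"

definition resps_of :: "bool \<Rightarrow> (bool \<times> 'ob) list \<Rightarrow> 'r list \<Rightarrow> 'r list" where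
  "resps_of b w rs = map snd (filter (\<lambda>x. fst x = b) (zip (map fst w) rs))"

definition commuteF :: "('s \<Rightarrow> 'ob \<Rightarrow> 's \<times> 'r) \<Rightarrow> 's \<Rightarrow> 'ob list \<Rightarrow> 'ob list \<Rightarrow> bool" where
  "commuteF F s rho1 rho2 \<longleftrightarrow>
     (\<forall>w w'. is_interleaving w rho1 rho2 \<and> is_interleaving w' rho1 rho2 \<longrightarrow>
        fst (runF F s (map snd w)) = fst (runF F s (map snd w'))
      \<and> resps_of True w (snd (runF F s (map snd w))) = resps_of True w' (snd (runF F s (map snd w')))
      \<and> resps_of False w (snd (runF F s (map snd w))) = resps_of False w' (snd (runF F s (map snd w'))))"

datatype zres = Success | Abort

text \<open>Ideal collision-free hash: hash values are free terms (injective).\<close>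
datatype 'ob hsh = HNull | Hash "'ob hsh" 'ob nat nat

text \<open>Signed payloads: InvokeP ob i = invoke||ob||i ; CommitP ob l h z = commit||ob||l||h||z.\<close>
datatype 'ob payload = InvokeP 'ob nat | CommitP 'ob nat "'ob hsh" zres

datatype 'ob sig = Sig nat "'ob payload"

datatype 'ob msg =
    Reply "('ob \<times> nat \<times> 'ob sig) list"
  | Broadcast 'ob nat "'ob hsh" zres "'ob sig" nat

datatype 'ob event = Invoke nat 'ob | Deliver nat "'ob msg"

text \<open>verify_j(phi, m) holds iff C_j previously executed sign_j(m) obtaining phi.
  The set S records all pairs (j, m) signed so far.\<close>
definition verify :: "(nat \<times> 'ob payload) set \<Rightarrow> nat \<Rightarrow> 'ob sig \<Rightarrow> 'ob payload \<Rightarrow> bool" where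
  "verify S j phi m \<longleftrightarrow> phi = Sig j m \<and> (j, m) \<in> S"

record ('ob, 's) cstate =
  cu :: "'ob option"
  cc :: nat
  cH :: "nat \<Rightarrow> 'ob hsh option"
  cZ :: "nat \<Rightarrow> zres option"
  cs :: 's
  chalted :: bool

text \<open>Global state; commits and confs are history (ghost) variables:
  commits i = operations committed by C_i with their sequence numbers, in commit order;
  confs k = operations confirmed by C_k as (ob, q, j), in confirmation order.\<close>
record ('ob, 's) gstate =
  cl :: "nat \<Rightarrow> ('ob, 's) cstate"
  sigs :: "(nat \<times> 'ob payload) set"
  invoked :: "'ob set"
  commits :: "nat \<Rightarrow> ('ob \<times> nat) list"
  confs :: "nat \<Rightarrow> ('ob \<times> nat \<times> nat) list"

definition init_client :: "'s \<Rightarrow> ('ob, 's) cstate" where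
  "init_client s0 = \<lparr> cu = None, cc = 0, cH = (\<lambda>_. None)(0 := Some HNull),
                      cZ = (\<lambda>_. None), cs = s0, chalted = False \<rparr>"

definition init_state :: "'s \<Rightarrow> ('ob, 's) gstate" where
  "init_state s0 = \<lparr> cl = (\<lambda>_. init_client s0), sigs = {}, invoked = {},
                     commits = (\<lambda>_. []), confs = (\<lambda>_. []) \<rparr>"

definition halt :: "('ob, 's) gstate \<Rightarrow> nat \<Rightarrow> ('ob, 's) gstate" where
  "halt gs i = gs\<lparr> cl := (cl gs)(i := (cl gs i)\<lparr> chalted := True \<rparr>) \<rparr>"

text \<open>The loop of step (2); l is the current index c + k. Returns None on halt.\<close>
fun reply_loop :: "(nat \<times> 'ob payload) set \<Rightarrow> nat \<Rightarrow> (nat \<Rightarrow> zres option) \<Rightarrow> nat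
    \<Rightarrow> ('ob \<times> nat \<times> 'ob sig) list \<Rightarrow> (nat \<Rightarrow> 'ob hsh option) \<Rightarrow> 'ob list \<Rightarrow> 'ob list
    \<Rightarrow> ((nat \<Rightarrow> 'ob hsh option) \<times> 'ob list \<times> 'ob list) option" where
  "reply_loop S i Z l [] H gam mu = Some (H, gam, mu)"
| "reply_loop S i Z l ((ob, j, tau) # w) H gam mu =
     (if \<not> verify S j tau (InvokeP ob j) then None
      else (let hv = Hash (the (H (l - 1))) ob l j in
        if H l \<noteq> None \<and> H l \<noteq> Some hv then None
        else reply_loop S i Z (Suc l) w
               (if H l = None then H(l := Some hv) else H)
               (if j \<noteq> i then gam @ [ob] else gam)
               (if j = i \<and> Z l = Some Success then mu @ [ob] else mu)))"

definition handle_reply :: "('s \<Rightarrow> 'ob \<Rightarrow> 's \<times> 'r) \<Rightarrow> ('ob, 's) gstate \<Rightarrow> nat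
    \<Rightarrow> ('ob \<times> nat \<times> 'ob sig) list \<Rightarrow> ('ob, 's) gstate" where
  "handle_reply F gs i w =
    (let st = cl gs i in
     case reply_loop (sigs gs) i (cZ st) (Suc (cc st)) w (cH st) [] [] of
       None \<Rightarrow> halt gs i
     | Some (H, gam, mu) \<Rightarrow>
        (if w = [] \<or> Some (fst (last w)) \<noteq> cu st \<or> fst (snd (last w)) \<noteq> i then halt gs i
         else (let u = the (cu st); l = cc st + length w; a = fst (runF F (cs st) mu);
                   z = (if commuteF F a [u] gam then Success else Abort)
               in gs\<lparr> cl := (cl gs)(i := st\<lparr> cH := H, cZ := (cZ st)(l := Some z), cu := None \<rparr>),
                      sigs := insert (i, CommitP u l (the (H l)) z) (sigs gs),
                      commits := (commits gs)(i := commits gs i @ [(u, l)]) \<rparr>)))"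

definition handle_broadcast :: "('s \<Rightarrow> 'ob \<Rightarrow> 's \<times> 'r) \<Rightarrow> ('ob, 's) gstate \<Rightarrow> nat
    \<Rightarrow> 'ob \<Rightarrow> nat \<Rightarrow> 'ob hsh \<Rightarrow> zres \<Rightarrow> 'ob sig \<Rightarrow> nat \<Rightarrow> ('ob, 's) gstate" where
  "handle_broadcast F gs i ob q h z phi j =
    (let st = cl gs i in
     if q \<noteq> Suc (cc st) \<or> \<not> verify (sigs gs) j phi (CommitP ob q h z) then halt gs i
     else (let H = (if cH st q = None then (cH st)(q := Some (Hash (the (cH st (q - 1))) ob q j))
                    else cH st) in
       if H q \<noteq> Some h then halt gs i
       else gs\<lparr> cl := (cl gs)(i := st\<lparr> cH := H,
                                   cs := (if z = Success then fst (F (cs st) ob) else cs st),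
                                   cc := Suc (cc st) \<rparr>),
                confs := (confs gs)(i := confs gs i @ [(ob, q, j)]) \<rparr>))"

definition deliver :: "('s \<Rightarrow> 'ob \<Rightarrow> 's \<times> 'r) \<Rightarrow> ('ob, 's) gstate \<Rightarrow> nat \<Rightarrow> 'ob msg \<Rightarrow> ('ob, 's) gstate" where
  "deliver F gs i m = (case m of
      Reply w \<Rightarrow> handle_reply F gs i w
    | Broadcast ob q h z phi j \<Rightarrow> handle_broadcast F gs i ob q h z phi j)"

text \<open>The server is arbitrary
  (Byzantine): any message may be delivered to any non-halted client; it cannot forge
  signatures.\<close>
inductive step :: "('s \<Rightarrow> 'ob \<Rightarrow> 's \<times> 'r) \<Rightarrow> nat \<Rightarrow> ('ob, 's) gstate \<Rightarrow> 'ob event \<Rightarrow> ('ob, 's) gstate \<Rightarrow> bool"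
  for F n where
  invoke: "\<lbrakk> i < n; \<not> chalted (cl gs i); cu (cl gs i) = None; ob \<notin> invoked gs \<rbrakk> \<Longrightarrow>
     step F n gs (Invoke i ob)
       (gs\<lparr> cl := (cl gs)(i := (cl gs i)\<lparr> cu := Some ob \<rparr>),
            sigs := insert (i, InvokeP ob i) (sigs gs),
            invoked := insert ob (invoked gs) \<rparr>)"
| deliv: "\<lbrakk> i < n; \<not> chalted (cl gs i) \<rbrakk> \<Longrightarrow> step F n gs (Deliver i m) (deliver F gs i m)"

inductive reachable :: "('s \<Rightarrow> 'ob \<Rightarrow> 's \<times> 'r) \<Rightarrow> 's \<Rightarrow> nat \<Rightarrow> ('ob, 's) gstate \<Rightarrow> bool"
  for F s0 n where
  init: "reachable F s0 n (init_state s0)"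
| stp: "reachable F s0 n gs \<Longrightarrow> step F n gs e gs' \<Longrightarrow> reachable F s0 n gs'"

definition confirmed :: "nat \<Rightarrow> ('ob, 's) gstate \<Rightarrow> 'ob \<Rightarrow> bool" where
  "confirmed n gs ob \<longleftrightarrow> (\<exists>k<n. ob \<in> fst ` set (confs gs k))"

text \<open>pi|^ob: the prefix of pi ending with (the first occurrence of) ob.\<close>
definition prefix_to :: "'ob \<Rightarrow> 'ob list \<Rightarrow> 'ob list" where
  "prefix_to ob xs = takeWhile (\<lambda>x. x \<noteq> ob) xs @ [ob]"

text \<open>is_pi n gs i pi: pi is pi_i (for some admissible choice of the confirming client C_k).\<close>
definition is_pi :: "nat \<Rightarrow> ('ob, 's) gstate \<Rightarrow> nat \<Rightarrow> 'ob list \<Rightarrow> bool" where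
  "is_pi n gs i pi \<longleftrightarrow>
    (if \<exists>ob l. (ob, l) \<in> set (commits gs i) \<and> confirmed n gs ob then
       (\<exists>ob l k. (ob, l) \<in> set (commits gs i) \<and> k < n \<and> ob \<in> fst ` set (confs gs k)
          \<and> (\<forall>ob' l'. (ob', l') \<in> set (commits gs i) \<and> confirmed n gs ob' \<longrightarrow> l' \<le> l)
          \<and> pi = prefix_to ob (map fst (confs gs k))
                 @ map fst (sort_key snd (filter (\<lambda>x. l < snd x) (commits gs i))))
     else pi = map fst (sort_key snd (commits gs i)))"

end

theory Submission
  imports Defs
begin

text \<open>Every client C_k extends its hash map H_k by one link per confirmed operation, and
  since the ideal hash is a free term, a value H_k[q] determines the whole sequence of
  operations chained into it. The value broadcast for a confirmed operation o was signed by
  its committer C_c as C_c's own H_c[l], where l is the sequence number of o; any client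
  accepting the broadcast checks that it equals its own H_k[l]. Hence every client's list of
  confirmations, cut after o, equals the chain encoded in H_c[l], independently of k. If
  o lies in both pi_i and pi_j and is confirmed, it lies in the alpha-parts, so both prefixes
  are this chain. If o is unconfirmed, it lies in a beta-part, i.e. was committed by both
  C_i and C_j; as invoke signatures bind o to a unique client, i = j, and pi_i is uniquely
  determined.\<close>

definition hash_chain :: "(nat \<Rightarrow> 'ob hsh option) \<Rightarrow> bool" where
  "hash_chain H \<longleftrightarrow> H 0 = Some HNull \<and>
     (\<forall>l x. H (Suc l) = Some x \<longrightarrow> (\<exists>y ob j. H l = Some y \<and> x = Hash y ob (Suc l) j))"

lemma map_le_SomeD: "m \<subseteq>\<^sub>m m' \<Longrightarrow> m x = Some y \<Longrightarrow> m' x = Some y"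
  by (auto simp: map_le_def dom_def)

lemma hash_chain_SomeD: "hash_chain H \<Longrightarrow> H (Suc p) = Some x \<Longrightarrow> \<exists>y. H p = Some y"
  unfolding hash_chain_def by blast

lemma hash_chain_upd:
  assumes "hash_chain H" "H (Suc c) = None" "H c = Some y"
  shows "hash_chain (H(Suc c \<mapsto> Hash y ob (Suc c) j))"
  unfolding hash_chain_def
proof (intro conjI allI impI)
  show "(H(Suc c \<mapsto> Hash y ob (Suc c) j)) 0 = Some HNull"
    using assms(1) by (simp add: hash_chain_def)
  fix l x assume h: "(H(Suc c \<mapsto> Hash y ob (Suc c) j)) (Suc l) = Some x"
  show "\<exists>y' ob' j'. (H(Suc c \<mapsto> Hash y ob (Suc c) j)) l = Some y' \<and> x = Hash y' ob' (Suc l) j'"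
  proof (cases "l = c")
    case True then show ?thesis using h assms by auto
  next
    case False
    with h have "H (Suc l) = Some x" by simp
    then obtain y' ob' j' where "H l = Some y'" "x = Hash y' ob' (Suc l) j'"
      using assms(1) unfolding hash_chain_def by blast
    moreover have "l \<noteq> Suc c" using \<open>H l = Some y'\<close> assms(2) by auto
    ultimately show ?thesis by auto
  qed
qed

lemma reply_loop_hash_chain:
  assumes "reply_loop S i Z (Suc c) w H gam mu = Some (H', g, m)" "hash_chain H" "H c \<noteq> None"
  shows "H \<subseteq>\<^sub>m H' \<and> hash_chain H' \<and>
    (w \<noteq> [] \<longrightarrow> (\<exists>p. H' (c + length w) =
        Some (Hash p (fst (last w)) (c + length w) (fst (snd (last w))))))"
  using assms
proof (induction w arbitrary: c H gam mu)
  case Nil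
  then show ?case by simp
next
  case (Cons a w)
  obtain ob j tau where a: "a = (ob, j, tau)" by (cases a) auto
  define hv where "hv = Hash (the (H c)) ob (Suc c) j"
  define H1 where "H1 = (if H (Suc c) = None then H(Suc c \<mapsto> hv) else H)"
  from Cons.prems(1) have ver: "verify S j tau (InvokeP ob j)"
    and fits: "H (Suc c) = None \<or> H (Suc c) = Some hv"
    by (simp_all add: a hv_def Let_def split: if_split_asm)
  with Cons.prems(1) obtain gam' mu' where
    rec: "reply_loop S i Z (Suc (Suc c)) w H1 gam' mu' = Some (H', g, m)"
    unfolding H1_def by (auto simp: a hv_def Let_def)
  have H1_at: "H1 (Suc c) = Some hv" using fits by (auto simp: H1_def)
  have H_le: "H \<subseteq>\<^sub>m H1" using fits by (auto simp: H1_def map_le_def)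
  have "hash_chain H1"
    using Cons.prems(2,3) hash_chain_upd[OF Cons.prems(2)] by (auto simp: H1_def hv_def)
  with Cons.IH[OF rec] H1_at have H1_le: "H1 \<subseteq>\<^sub>m H'" and "hash_chain H'"
    and last_w: "w \<noteq> [] \<Longrightarrow> \<exists>p. H' (Suc c + length w) =
        Some (Hash p (fst (last w)) (Suc c + length w) (fst (snd (last w))))"
    by auto
  have "H' (Suc c) = Some hv" using map_le_SomeD[OF H1_le H1_at] .
  with map_le_trans[OF H_le H1_le] \<open>hash_chain H'\<close> last_w show ?case
    by (cases "w = []") (simp_all add: a hv_def)
qed

definition client_chains :: "('ob, 's) gstate \<Rightarrow> bool" where
  "client_chains gs \<longleftrightarrow> (\<forall>k. hash_chain (cH (cl gs k)))"

definition counter_confs :: "('ob, 's) gstate \<Rightarrow> bool" where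
  "counter_confs gs \<longleftrightarrow> (\<forall>k. cc (cl gs k) = length (confs gs k))"

definition confs_hashed :: "('ob, 's) gstate \<Rightarrow> bool" where
  "confs_hashed gs \<longleftrightarrow> (\<forall>k p. p < length (confs gs k) \<longrightarrow>
     (\<exists>ob j h z. confs gs k ! p = (ob, Suc p, j) \<and> cH (cl gs k) (Suc p) = Some h
        \<and> h = Hash (the (cH (cl gs k) p)) ob (Suc p) j \<and> (j, CommitP ob (Suc p) h z) \<in> sigs gs))"

definition commit_sigs_sound :: "('ob, 's) gstate \<Rightarrow> bool" where
  "commit_sigs_sound gs \<longleftrightarrow> (\<forall>j ob q h z. (j, CommitP ob q h z) \<in> sigs gs \<longrightarrow>
     (ob, q) \<in> set (commits gs j) \<and> cH (cl gs j) q = Some h)"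

definition commits_hashed :: "('ob, 's) gstate \<Rightarrow> bool" where
  "commits_hashed gs \<longleftrightarrow> (\<forall>j ob l. (ob, l) \<in> set (commits gs j) \<longrightarrow>
     (\<exists>p. cH (cl gs j) l = Some (Hash p ob l j)))"

definition invoke_sigs_sound :: "('ob, 's) gstate \<Rightarrow> bool" where
  "invoke_sigs_sound gs \<longleftrightarrow> (\<forall>j ob j'. (j, InvokeP ob j') \<in> sigs gs \<longrightarrow> j' = j \<and> ob \<in> invoked gs)"

definition invoke_sigs_unique :: "('ob, 's) gstate \<Rightarrow> bool" where
  "invoke_sigs_unique gs \<longleftrightarrow>
     (\<forall>i j ob. (i, InvokeP ob i) \<in> sigs gs \<longrightarrow> (j, InvokeP ob j) \<in> sigs gs \<longrightarrow> i = j)"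

definition commits_signed :: "('ob, 's) gstate \<Rightarrow> bool" where
  "commits_signed gs \<longleftrightarrow> (\<forall>j ob l. (ob, l) \<in> set (commits gs j) \<longrightarrow> (j, InvokeP ob j) \<in> sigs gs)"

definition commits_distinct :: "('ob, 's) gstate \<Rightarrow> bool" where
  "commits_distinct gs \<longleftrightarrow> (\<forall>j. distinct (map fst (commits gs j)))"

definition pending_uncommitted :: "('ob, 's) gstate \<Rightarrow> bool" where
  "pending_uncommitted gs \<longleftrightarrow> (\<forall>j u. cu (cl gs j) = Some u \<longrightarrow>
     u \<notin> fst ` set (commits gs j) \<and> (j, InvokeP u j) \<in> sigs gs)"

definition cop_inv :: "('ob, 's) gstate \<Rightarrow> bool" where
  "cop_inv gs \<longleftrightarrow> client_chains gs \<and> counter_confs gs \<and> confs_hashed gs \<and> commit_sigs_sound gs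
     \<and> commits_hashed gs \<and> invoke_sigs_sound gs \<and> invoke_sigs_unique gs \<and> commits_signed gs
     \<and> commits_distinct gs \<and> pending_uncommitted gs"

lemmas cop_inv_defs = cop_inv_def client_chains_def counter_confs_def confs_hashed_def
  commit_sigs_sound_def commits_hashed_def invoke_sigs_sound_def invoke_sigs_unique_def
  commits_signed_def commits_distinct_def pending_uncommitted_def

lemma cop_inv_init: "cop_inv (init_state s0)"
  by (auto simp: cop_inv_defs init_state_def init_client_def hash_chain_def)

lemma cop_inv_halt: "cop_inv gs \<Longrightarrow> cop_inv (halt gs i)"
  unfolding cop_inv_defs halt_def by simp

lemma cop_inv_hash_chain: "cop_inv gs \<Longrightarrow> hash_chain (cH (cl gs k))"
  by (simp add: cop_inv_def client_chains_def)

lemma cop_inv_hash_at_counter: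
  assumes "cop_inv gs" shows "cH (cl gs k) (cc (cl gs k)) \<noteq> None"
proof (cases "cc (cl gs k)")
  case 0
  then show ?thesis using cop_inv_hash_chain[OF assms] by (simp add: hash_chain_def)
next
  case (Suc p)
  then have "p < length (confs gs k)"
    using assms by (simp add: cop_inv_def counter_confs_def)
  then show ?thesis using assms Suc unfolding cop_inv_def confs_hashed_def by force
qed

lemma cop_inv_invoke:
  assumes inv: "cop_inv gs" and fresh: "ob \<notin> invoked gs"
  shows "cop_inv (gs\<lparr> cl := (cl gs)(i := (cl gs i)\<lparr> cu := Some ob \<rparr>),
            sigs := insert (i, InvokeP ob i) (sigs gs), invoked := insert ob (invoked gs) \<rparr>)"
proof -
  have unsigned: "\<And>j j'. (j, InvokeP ob j') \<notin> sigs gs"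
    using inv fresh unfolding cop_inv_def invoke_sigs_sound_def by blast
  moreover from this have "ob \<notin> fst ` set (commits gs i)"
    using inv unfolding cop_inv_def commits_signed_def by force
  ultimately show ?thesis using inv unfolding cop_inv_defs by simp
qed

lemma cop_inv_commit:
  assumes inv: "cop_inv gs"
    and loop: "reply_loop (sigs gs) i (cZ (cl gs i)) (Suc (cc (cl gs i))) w (cH (cl gs i)) [] []
               = Some (H, gam, mu)"
    and "w \<noteq> []" and pending: "cu (cl gs i) = Some u"
    and u: "u = fst (last w)" and own: "fst (snd (last w)) = i" and l: "l = cc (cl gs i) + length w"
  shows "cop_inv (gs\<lparr> cl := (cl gs)(i := (cl gs i)\<lparr> cH := H, cZ := Z', cu := None \<rparr>),
                      sigs := insert (i, CommitP u l (the (H l)) z) (sigs gs),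
                      commits := (commits gs)(i := commits gs i @ [(u, l)]) \<rparr>)" (is "cop_inv ?g")
proof -
  from reply_loop_hash_chain[OF loop cop_inv_hash_chain[OF inv] cop_inv_hash_at_counter[OF inv]] \<open>w \<noteq> []\<close>
  obtain p where H_ge: "cH (cl gs i) \<subseteq>\<^sub>m H" and "hash_chain H" and Hl: "H l = Some (Hash p u l i)"
    unfolding u l own by blast
  have grows: "\<And>k x y. cH (cl gs k) x = Some y \<Longrightarrow> cH (cl ?g k) x = Some y"
    using map_le_SomeD[OF H_ge] by auto
  have fresh: "u \<notin> fst ` set (commits gs i)" and signed: "(i, InvokeP u i) \<in> sigs gs"
    using inv pending unfolding cop_inv_def pending_uncommitted_def by auto
  have "client_chains ?g"
    using inv \<open>hash_chain H\<close> by (simp add: cop_inv_def client_chains_def)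
  moreover have "counter_confs ?g" using inv by (simp add: cop_inv_def counter_confs_def)
  moreover have "confs_hashed ?g"
    unfolding confs_hashed_def
  proof (intro allI impI)
    fix k q assume "q < length (confs ?g k)"
    then have "q < length (confs gs k)" by simp
    with inv obtain ob j h z' where A: "confs gs k ! q = (ob, Suc q, j)" "cH (cl gs k) (Suc q) = Some h"
      "h = Hash (the (cH (cl gs k) q)) ob (Suc q) j" "(j, CommitP ob (Suc q) h z') \<in> sigs gs"
      unfolding cop_inv_def confs_hashed_def by blast
    moreover obtain y where "cH (cl gs k) q = Some y"
      using hash_chain_SomeD[OF cop_inv_hash_chain[OF inv] A(2)] by blast
    ultimately show "\<exists>ob j h z. confs ?g k ! q = (ob, Suc q, j) \<and> cH (cl ?g k) (Suc q) = Some h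
        \<and> h = Hash (the (cH (cl ?g k) q)) ob (Suc q) j \<and> (j, CommitP ob (Suc q) h z) \<in> sigs ?g"
      using grows[of k q y] grows[OF A(2)] by auto
  qed
  moreover have "commit_sigs_sound ?g"
    using inv Hl grows unfolding cop_inv_def commit_sigs_sound_def by fastforce
  moreover have "commits_hashed ?g"
    unfolding commits_hashed_def
  proof (intro allI impI)
    fix j ob l' assume "(ob, l') \<in> set (commits ?g j)"
    then consider "j = i" "ob = u" "l' = l" | "(ob, l') \<in> set (commits gs j)"
      by (auto split: if_splits)
    then show "\<exists>p. cH (cl ?g j) l' = Some (Hash p ob l' j)"
    proof cases
      case 1 then show ?thesis using Hl by simp
    next
      case 2 then show ?thesis using inv grows unfolding cop_inv_def commits_hashed_def by blast
    qed
  qed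
  moreover have "invoke_sigs_sound ?g" "invoke_sigs_unique ?g"
    using inv by (simp_all add: cop_inv_def invoke_sigs_sound_def invoke_sigs_unique_def)
  moreover have "commits_signed ?g"
    using inv signed by (auto simp: cop_inv_def commits_signed_def)
  moreover have "commits_distinct ?g"
    using inv fresh by (simp add: cop_inv_def commits_distinct_def)
  moreover have "pending_uncommitted ?g"
    using inv by (simp add: cop_inv_def pending_uncommitted_def)
  ultimately show ?thesis unfolding cop_inv_def by blast
qed

lemma cop_inv_confirm:
  assumes inv: "cop_inv gs"
    and q: "q = Suc (cc (cl gs i))" and signed: "(j, CommitP ob q h z) \<in> sigs gs"
    and H: "H = (if cH (cl gs i) q = None
                 then (cH (cl gs i))(q \<mapsto> Hash (the (cH (cl gs i) (q - 1))) ob q j)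
                 else cH (cl gs i))"
    and Hq: "H q = Some h"
  shows "cop_inv (gs\<lparr> cl := (cl gs)(i := (cl gs i)\<lparr> cH := H, cs := s', cc := Suc (cc (cl gs i)) \<rparr>),
                confs := (confs gs)(i := confs gs i @ [(ob, q, j)]) \<rparr>)" (is "cop_inv ?g")
proof -
  let ?c = "cc (cl gs i)"
  have chain: "hash_chain (cH (cl gs i))" using cop_inv_hash_chain[OF inv] .
  obtain y where y: "cH (cl gs i) ?c = Some y" using cop_inv_hash_at_counter[OF inv, of i] by blast
  have H_ge: "cH (cl gs i) \<subseteq>\<^sub>m H" using H by (auto simp: map_le_def)
  have "hash_chain H"
    using H q chain hash_chain_upd[OF chain _ y] y by auto
  have Hc: "H ?c = Some y" using H y q by auto
  have h: "h = Hash y ob q j"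
  proof (cases "cH (cl gs i) q = None")
    case True then show ?thesis using H Hq y q by simp
  next
    case False
    then have "cH (cl gs i) q = Some h" using H Hq by auto
    then obtain y' o' j' where "cH (cl gs i) ?c = Some y'" "h = Hash y' o' q j'"
      using chain q unfolding hash_chain_def by blast
    moreover from inv signed have "(ob, q) \<in> set (commits gs j)" "cH (cl gs j) q = Some h"
      unfolding cop_inv_def commit_sigs_sound_def by blast+
    moreover from inv this(1) obtain p where "cH (cl gs j) q = Some (Hash p ob q j)"
      unfolding cop_inv_def commits_hashed_def by blast
    ultimately show ?thesis using y by auto
  qed
  have grows: "\<And>k x y. cH (cl gs k) x = Some y \<Longrightarrow> cH (cl ?g k) x = Some y"
    using map_le_SomeD[OF H_ge] by auto
  have "client_chains ?g"
    using inv \<open>hash_chain H\<close> by (simp add: cop_inv_def client_chains_def)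
  moreover have "counter_confs ?g" using inv by (simp add: cop_inv_def counter_confs_def)
  moreover have "confs_hashed ?g"
    unfolding confs_hashed_def
  proof (intro allI impI)
    fix k p assume p: "p < length (confs ?g k)"
    show "\<exists>ob j h z. confs ?g k ! p = (ob, Suc p, j) \<and> cH (cl ?g k) (Suc p) = Some h
        \<and> h = Hash (the (cH (cl ?g k) p)) ob (Suc p) j \<and> (j, CommitP ob (Suc p) h z) \<in> sigs ?g"
    proof (cases "k = i \<and> p = length (confs gs i)")
      case True
      then have "p = ?c" using inv by (simp add: cop_inv_def counter_confs_def)
      with True signed Hq Hc h q show ?thesis by auto
    next
      case False
      with p have p': "p < length (confs gs k)" by (auto split: if_splits)
      with False have "confs ?g k ! p = confs gs k ! p" by (auto simp: nth_append)
      moreover from inv p' obtain ob j h z where A: "confs gs k ! p = (ob, Suc p, j)"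
        "cH (cl gs k) (Suc p) = Some h" "h = Hash (the (cH (cl gs k) p)) ob (Suc p) j"
        "(j, CommitP ob (Suc p) h z) \<in> sigs gs"
        unfolding cop_inv_def confs_hashed_def by blast
      moreover obtain y where "cH (cl gs k) p = Some y"
        using hash_chain_SomeD[OF cop_inv_hash_chain[OF inv] A(2)] by blast
      ultimately show ?thesis using grows[of k p y] grows[OF A(2)] by auto
    qed
  qed
  moreover have "commit_sigs_sound ?g"
    using inv grows unfolding cop_inv_def commit_sigs_sound_def by fastforce
  moreover have "commits_hashed ?g"
    unfolding commits_hashed_def
  proof (intro allI impI)
    fix j' ob' l' assume "(ob', l') \<in> set (commits ?g j')"
    then have "(ob', l') \<in> set (commits gs j')" by simp
    with inv obtain p where "cH (cl gs j') l' = Some (Hash p ob' l' j')"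
      unfolding cop_inv_def commits_hashed_def by blast
    then show "\<exists>p. cH (cl ?g j') l' = Some (Hash p ob' l' j')" using grows by blast
  qed
  moreover have "invoke_sigs_sound ?g" "invoke_sigs_unique ?g" "commits_signed ?g"
      "commits_distinct ?g" "pending_uncommitted ?g"
    using inv by (simp_all add: cop_inv_def invoke_sigs_sound_def invoke_sigs_unique_def
        commits_signed_def commits_distinct_def pending_uncommitted_def)
  ultimately show ?thesis unfolding cop_inv_def by blast
qed

lemma cop_inv_handle_reply:
  assumes inv: "cop_inv gs" shows "cop_inv (handle_reply F gs i w)"
proof (cases "reply_loop (sigs gs) i (cZ (cl gs i)) (Suc (cc (cl gs i))) w (cH (cl gs i)) [] []")
  case None
  then show ?thesis using cop_inv_halt[OF inv] by (simp add: handle_reply_def)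
next
  case (Some r)
  obtain H gam mu where r: "r = (H, gam, mu)" by (cases r)
  show ?thesis
  proof (cases "w = [] \<or> Some (fst (last w)) \<noteq> cu (cl gs i) \<or> fst (snd (last w)) \<noteq> i")
    case True
    then show ?thesis using cop_inv_halt[OF inv] Some r by (simp add: handle_reply_def)
  next
    case False
    then have pending: "cu (cl gs i) = Some (fst (last w))" by simp
    with False Some r cop_inv_commit[OF inv _ _ pending refl _ refl]
    show ?thesis by (simp add: handle_reply_def Let_def)
  qed
qed

lemma cop_inv_handle_broadcast:
  assumes inv: "cop_inv gs" shows "cop_inv (handle_broadcast F gs i ob q h z phi j)"
proof (cases "q = Suc (cc (cl gs i)) \<and> verify (sigs gs) j phi (CommitP ob q h z)")
  case False
  then show ?thesis using cop_inv_halt[OF inv] by (auto simp: handle_broadcast_def)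
next
  case True
  define H where "H = (if cH (cl gs i) q = None
                 then (cH (cl gs i))(q \<mapsto> Hash (the (cH (cl gs i) (q - 1))) ob q j)
                 else cH (cl gs i))"
  have signed: "(j, CommitP ob q h z) \<in> sigs gs" using True unfolding verify_def by blast
  show ?thesis
    using True cop_inv_halt[OF inv] cop_inv_confirm[OF inv _ signed H_def]
    unfolding handle_broadcast_def Let_def H_def[symmetric] by simp
qed

lemma cop_inv_step: "cop_inv gs \<Longrightarrow> step F n gs e gs' \<Longrightarrow> cop_inv gs'"
  by (auto elim!: step.cases intro: cop_inv_invoke cop_inv_handle_reply cop_inv_handle_broadcast
      simp: deliver_def split: msg.split)

lemma reachable_cop_inv: "reachable F s0 n gs \<Longrightarrow> cop_inv gs"
  by (induction rule: reachable.induct) (auto intro: cop_inv_init cop_inv_step)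

fun hash_ops :: "'ob hsh \<Rightarrow> 'ob list" where
  "hash_ops HNull = []"
| "hash_ops (Hash p ob l j) = hash_ops p @ [ob]"

lemma hash_ops_confs:
  assumes inv: "cop_inv gs"
  shows "p \<le> length (confs gs k) \<Longrightarrow> hash_ops (the (cH (cl gs k) p)) = map fst (take p (confs gs k))"
proof (induction p)
  case 0
  then show ?case using cop_inv_hash_chain[OF inv] by (simp add: hash_chain_def)
next
  case (Suc p)
  then have "p < length (confs gs k)" by simp
  with inv obtain ob j where "confs gs k ! p = (ob, Suc p, j)"
    and "cH (cl gs k) (Suc p) = Some (Hash (the (cH (cl gs k) p)) ob (Suc p) j)"
    unfolding cop_inv_def confs_hashed_def by blast
  with Suc \<open>p < length (confs gs k)\<close> show ?case by (simp add: take_Suc_conv_app_nth)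
qed

lemma committed_unique:
  assumes inv: "cop_inv gs" and "(ob, l) \<in> set (commits gs c)" "(ob, l') \<in> set (commits gs c')"
  shows "c = c' \<and> l = l'"
proof -
  have "(c, InvokeP ob c) \<in> sigs gs" "(c', InvokeP ob c') \<in> sigs gs"
    using inv assms(2,3) unfolding cop_inv_def commits_signed_def by blast+
  then have "c = c'" using inv unfolding cop_inv_def invoke_sigs_unique_def by blast
  moreover have "distinct (map fst (commits gs c))"
    using inv unfolding cop_inv_def commits_distinct_def by blast
  ultimately show ?thesis using map_of_is_SomeI assms(2,3) by fastforce
qed

lemma prefix_to_eq_take:
  "ob \<in> set xs \<Longrightarrow> \<exists>p < length xs. xs ! p = ob \<and> prefix_to ob xs = take (Suc p) xs"
proof (induction xs)
  case (Cons x xs)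
  show ?case
  proof (cases "x = ob")
    case True then show ?thesis by (auto simp: prefix_to_def)
  next
    case False
    with Cons obtain p where "p < length xs" "xs ! p = ob" "prefix_to ob xs = take (Suc p) xs"
      by auto
    with False show ?thesis by (intro exI[of _ "Suc p"]) (simp add: prefix_to_def)
  qed
qed simp

lemma prefix_to_append: "ob \<in> set xs \<Longrightarrow> prefix_to ob (xs @ ys) = prefix_to ob xs"
  by (simp add: prefix_to_def takeWhile_append1[where x = ob])

lemma prefix_to_prefix_to:
  "a \<in> set xs \<Longrightarrow> ob \<in> set (prefix_to a xs) \<Longrightarrow> prefix_to ob (prefix_to a xs) = prefix_to ob xs"
  by (induction xs) (auto simp: prefix_to_def)

lemma set_prefix_to_subset: "a \<in> set xs \<Longrightarrow> set (prefix_to a xs) \<subseteq> set xs"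
  by (induction xs) (auto simp: prefix_to_def)

lemma confs_prefix_committed_hash:
  assumes inv: "cop_inv gs" and ob: "ob \<in> fst ` set (confs gs k)"
  shows "\<exists>c l. (ob, l) \<in> set (commits gs c)
           \<and> prefix_to ob (map fst (confs gs k)) = hash_ops (the (cH (cl gs c) l))"
proof -
  from ob obtain p where p: "p < length (confs gs k)" "fst (confs gs k ! p) = ob"
    and prefix: "prefix_to ob (map fst (confs gs k)) = map fst (take (Suc p) (confs gs k))"
    using prefix_to_eq_take[of ob "map fst (confs gs k)"] by (auto simp: take_map)
  from inv p(1) obtain ob' j h z where "confs gs k ! p = (ob', Suc p, j)"
    and "cH (cl gs k) (Suc p) = Some h" and "(j, CommitP ob' (Suc p) h z) \<in> sigs gs"
    unfolding cop_inv_def confs_hashed_def by blast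
  moreover from this(1) p(2) have "ob' = ob" by simp
  ultimately have "cH (cl gs k) (Suc p) = Some h" and "(j, CommitP ob (Suc p) h z) \<in> sigs gs"
    by simp_all
  moreover from inv this(2) have "(ob, Suc p) \<in> set (commits gs j)" "cH (cl gs j) (Suc p) = Some h"
    unfolding cop_inv_def commit_sigs_sound_def by blast+
  ultimately show ?thesis
    using prefix hash_ops_confs[OF inv, of "Suc p" k] p(1) by (intro exI[of _ j] exI[of _ "Suc p"]) simp
qed

lemma confs_prefix_eq_hash_ops:
  assumes inv: "cop_inv gs" and "ob \<in> fst ` set (confs gs k)" and "(ob, l) \<in> set (commits gs c)"
  shows "prefix_to ob (map fst (confs gs k)) = hash_ops (the (cH (cl gs c) l))"
  using confs_prefix_committed_hash[OF assms(1,2)] committed_unique[OF inv assms(3)] by blast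

lemma prefix_to_pi_confirmed:
  assumes inv: "cop_inv gs" and pi: "is_pi n gs i pi" and "ob \<in> set pi"
    and confirmed: "confirmed n gs ob" and committed: "(ob, l) \<in> set (commits gs c)"
  shows "prefix_to ob pi = hash_ops (the (cH (cl gs c) l))"
proof (cases "\<exists>ob l. (ob, l) \<in> set (commits gs i) \<and> confirmed n gs ob")
  case True
  with pi obtain ob1 l1 k1 where "k1 < n" and ob1: "ob1 \<in> fst ` set (confs gs k1)"
    and last_confirmed: "\<forall>ob' l'. (ob', l') \<in> set (commits gs i) \<and> confirmed n gs ob' \<longrightarrow> l' \<le> l1"
    and pi_eq: "pi = prefix_to ob1 (map fst (confs gs k1))
                     @ map fst (sort_key snd (filter (\<lambda>x. l1 < snd x) (commits gs i)))"
    unfolding is_pi_def by auto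
  let ?xs = "map fst (confs gs k1)"
  have "ob \<notin> set (map fst (sort_key snd (filter (\<lambda>x. l1 < snd x) (commits gs i))))"
    using last_confirmed confirmed by force
  with \<open>ob \<in> set pi\<close> pi_eq have ob_alpha: "ob \<in> set (prefix_to ob1 ?xs)" by auto
  have ob1_xs: "ob1 \<in> set ?xs" using ob1 by simp
  have "prefix_to ob pi = prefix_to ob (prefix_to ob1 ?xs)"
    using pi_eq prefix_to_append[OF ob_alpha] by simp
  also have "\<dots> = prefix_to ob ?xs" using prefix_to_prefix_to[OF ob1_xs ob_alpha] .
  also have "\<dots> = hash_ops (the (cH (cl gs c) l))"
    using confs_prefix_eq_hash_ops[OF inv _ committed] set_prefix_to_subset[OF ob1_xs] ob_alpha
    by force
  finally show ?thesis .
next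
  case False
  then have "pi = map fst (sort_key snd (commits gs i))" using pi unfolding is_pi_def by auto
  with \<open>ob \<in> set pi\<close> False confirmed show ?thesis by auto
qed

lemma pi_unconfirmed_committed:
  assumes pi: "is_pi n gs i pi" and "ob \<in> set pi" and unconfirmed: "\<not> confirmed n gs ob"
  shows "\<exists>l. (ob, l) \<in> set (commits gs i)"
proof (cases "\<exists>ob l. (ob, l) \<in> set (commits gs i) \<and> confirmed n gs ob")
  case True
  with pi obtain ob1 l1 k1 where "k1 < n" and ob1: "ob1 \<in> set (map fst (confs gs k1))"
    and pi_eq: "pi = prefix_to ob1 (map fst (confs gs k1))
                     @ map fst (sort_key snd (filter (\<lambda>x. l1 < snd x) (commits gs i)))"
    unfolding is_pi_def by auto
  have "ob \<notin> set (prefix_to ob1 (map fst (confs gs k1)))"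
    using set_prefix_to_subset[OF ob1] unconfirmed \<open>k1 < n\<close> unfolding confirmed_def by auto
  with \<open>ob \<in> set pi\<close> pi_eq show ?thesis by auto
next
  case False
  then have "pi = map fst (sort_key snd (commits gs i))" using pi unfolding is_pi_def by auto
  with \<open>ob \<in> set pi\<close> show ?thesis by auto
qed

lemma is_pi_unique:
  assumes inv: "cop_inv gs" and "is_pi n gs i pi" and "is_pi n gs i pi'"
  shows "pi = pi'"
proof (cases "\<exists>ob l. (ob, l) \<in> set (commits gs i) \<and> confirmed n gs ob")
  case True
  with assms(2) obtain ob1 l1 k1 where A: "(ob1, l1) \<in> set (commits gs i)" "k1 < n"
    "ob1 \<in> fst ` set (confs gs k1)"
    "\<forall>ob' l'. (ob', l') \<in> set (commits gs i) \<and> confirmed n gs ob' \<longrightarrow> l' \<le> l1"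
    "pi = prefix_to ob1 (map fst (confs gs k1))
            @ map fst (sort_key snd (filter (\<lambda>x. l1 < snd x) (commits gs i)))"
    unfolding is_pi_def by auto
  from True assms(3) obtain ob2 l2 k2 where B: "(ob2, l2) \<in> set (commits gs i)" "k2 < n"
    "ob2 \<in> fst ` set (confs gs k2)"
    "\<forall>ob' l'. (ob', l') \<in> set (commits gs i) \<and> confirmed n gs ob' \<longrightarrow> l' \<le> l2"
    "pi' = prefix_to ob2 (map fst (confs gs k2))
            @ map fst (sort_key snd (filter (\<lambda>x. l2 < snd x) (commits gs i)))"
    unfolding is_pi_def by auto
  have "confirmed n gs ob1" "confirmed n gs ob2"
    using A(2,3) B(2,3) unfolding confirmed_def by blast+
  with A(1,4) B(1,4) have "l1 = l2" by (meson le_antisym)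
  moreover from inv A(1) B(1) obtain p1 p2 where "cH (cl gs i) l1 = Some (Hash p1 ob1 l1 i)"
    "cH (cl gs i) l2 = Some (Hash p2 ob2 l2 i)"
    unfolding cop_inv_def commits_hashed_def by blast
  ultimately have "ob1 = ob2" by simp
  with \<open>l1 = l2\<close> A(5) B(5) show ?thesis
    using confs_prefix_eq_hash_ops[OF inv A(3,1)] confs_prefix_eq_hash_ops[OF inv B(3,1)] by simp
next
  case False
  then show ?thesis using assms(2,3) unfolding is_pi_def by auto
qed

theorem lemma6:
  fixes F :: "'s \<Rightarrow> 'ob \<Rightarrow> 's \<times> 'r" and s0 :: 's and n :: nat
    and gs :: "('ob, 's) gstate" and i j :: nat and pii pij :: "'ob list" and ob :: 'ob
  assumes "reachable F s0 n gs"
    and "i < n" and "j < n"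
    and "is_pi n gs i pii" and "is_pi n gs j pij"
    and "ob \<in> set pii" and "ob \<in> set pij"
  shows "prefix_to ob pii = prefix_to ob pij"
proof -
  have inv: "cop_inv gs" using reachable_cop_inv[OF assms(1)] .
  show ?thesis
  proof (cases "confirmed n gs ob")
    case True
    then obtain k where "ob \<in> fst ` set (confs gs k)" unfolding confirmed_def by blast
    then obtain c l where "(ob, l) \<in> set (commits gs c)"
      using confs_prefix_committed_hash[OF inv] by blast
    with True show ?thesis
      using prefix_to_pi_confirmed[OF inv assms(4,6)] prefix_to_pi_confirmed[OF inv assms(5,7)] by simp
  next
    case False
    then obtain l l' where "(ob, l) \<in> set (commits gs i)" "(ob, l') \<in> set (commits gs j)"
      using pi_unconfirmed_committed assms(4-7) by metis
    then have "i = j" using committed_unique[OF inv] by blast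
    then show ?thesis using is_pi_unique[OF inv assms(4)] assms(5) by simp
  qed
qed

end
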